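(* Let $m \ge 1$ and $n_c \ge 5$ be integers, let $\mathcal G_m^{n_c}=(\mathcal V,\mathcal E)$ be the 1D honeycomb network defined in the context, and let $c>0$. Consider the Kuramoto model $$\dot\theta_i=\omega_i+\sum_{j=1}^n a_{ij}\sin(\theta_j-\theta_i),\qquad i\in\mathcal V,$$ with $a_{ij}=a_{ji}=c$ for every edge $(i,j)\in\mathcal E$, $a_{ij}=0$ otherwise, and identical natural frequencies $\omega_i=\omega_j$ for all $i,j\in\mathcal V$. Consider the phase configurations $\theta=(\theta_1,\dots,\theta_n)\in(\mathbb R/2\pi\mathbb Z)^n$ satisfying: (C1) for every edge $(i,j)\in\mathcal E$ there is $k\in\mathbb Z$ with $|k|\le \lceil n_c/4\rceil-1$ and $\theta_i-\theta_j\equiv \frac{2\pi k}{n_c}\pmod{2\pi}$; and (C2) for every $p\in\{0,\dots,m-1\}$ and all $i,j\in\{p(n_c-1)+1,\dots,(p+1)(n_c-1)\}$, $\theta_i-\theta_{i+1}\equiv\theta_j-\theta_{j+1}\pmod{2\pi}$. Then, modulo a common rotation of all phases, there are exactly $(2\lceil n_c/4\rceil-1)^m$ configurations satisfying (C1) and (C2); each of them is a phase-locked configuration of the model, and each is locally exponentially stable (modulo the one-dimensional rotational symmetry, i.e. the Jacobian at the configuration has a simple zero eigenvalue in the direction $(1,\dots,1)$ and all other eigenvalues negative).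
   Context: The 1D honeycomb network $\mathcal G_m^{n_c}$ with $m$ cycles of $n_c$ nodes each is the undirected graph with vertex set $\mathcal V=\{1,2,\dots,m(n_c-1)+1\}$ (so $n=m(n_c-1)+1$) and edge set $\mathcal E=\mathcal E_1\cup\mathcal E_2$, where $\mathcal E_1=\{(i,i+1): 1\le i\le m(n_c-1)\}$ and $\mathcal E_2=\{(i,i+n_c-1): i=p(n_c-1)+1,\ p=0,1,\dots,m-1\}$. Thus for each $p$ the nodes $p(n_c-1)+1,\dots,(p+1)(n_c-1)+1$ form a cycle of length $n_c$, and consecutive cycles share exactly one node and no edge. A phase-locked configuration is a solution in which all phase velocities $\dot\theta_i$ are equal for all times; equivalently, in the frame rotating at the common natural frequency, it is an equilibrium of the dynamics. $\lceil\cdot\rceil$ denotes the ceiling function. *)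

theory Defs
  imports Complex_Main "Jordan_Normal_Form.Char_Poly"
begin

text \<open>1D honeycomb network with m cycles of nc nodes; vertices 1..n.\<close>

definition hc_n :: "nat \<Rightarrow> nat \<Rightarrow> nat" where
  "hc_n m nc = m * (nc - 1) + 1"

definition hc_V :: "nat \<Rightarrow> nat \<Rightarrow> nat set" where
  "hc_V m nc = {1 .. hc_n m nc}"

definition hc_edge :: "nat \<Rightarrow> nat \<Rightarrow> nat \<Rightarrow> nat \<Rightarrow> bool" where
  "hc_edge m nc i j \<longleftrightarrow>
     (1 \<le> i \<and> i \<le> m * (nc - 1) \<and> j = i + 1) \<or>
     (\<exists>p<m. i = p * (nc - 1) + 1 \<and> j = i + nc - 1)"

definition hc_adj :: "nat \<Rightarrow> nat \<Rightarrow> real \<Rightarrow> nat \<Rightarrow> nat \<Rightarrow> real" where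
  "hc_adj m nc c i j = (if hc_edge m nc i j \<or> hc_edge m nc j i then c else 0)"

definition kuramoto_rhs ::
  "nat \<Rightarrow> nat \<Rightarrow> real \<Rightarrow> (nat \<Rightarrow> real) \<Rightarrow> (nat \<Rightarrow> real) \<Rightarrow> nat \<Rightarrow> real" where
  "kuramoto_rhs m nc c \<omega> \<theta> i =
     \<omega> i + (\<Sum>j = 1 .. hc_n m nc. hc_adj m nc c i j * sin (\<theta> j - \<theta> i))"

definition phase_locked ::
  "nat \<Rightarrow> nat \<Rightarrow> real \<Rightarrow> (nat \<Rightarrow> real) \<Rightarrow> (nat \<Rightarrow> real) \<Rightarrow> bool" where
  "phase_locked m nc c \<omega> \<theta> \<longleftrightarrow>
     (\<forall>i \<in> hc_V m nc. \<forall>j \<in> hc_V m nc.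
        kuramoto_rhs m nc c \<omega> \<theta> i = kuramoto_rhs m nc c \<omega> \<theta> j)"

definition cong_2pi :: "real \<Rightarrow> real \<Rightarrow> bool" where
  "cong_2pi x y \<longleftrightarrow> (\<exists>k::int. x - y = 2 * pi * of_int k)"

definition cond_C1 :: "nat \<Rightarrow> nat \<Rightarrow> (nat \<Rightarrow> real) \<Rightarrow> bool" where
  "cond_C1 m nc \<theta> \<longleftrightarrow>
     (\<forall>i j. hc_edge m nc i j \<longrightarrow>
        (\<exists>k::int. \<bar>k\<bar> \<le> \<lceil>real nc / 4\<rceil> - 1 \<and>
                  cong_2pi (\<theta> i - \<theta> j) (2 * pi * of_int k / real nc)))"

definition cond_C2 :: "nat \<Rightarrow> nat \<Rightarrow> (nat \<Rightarrow> real) \<Rightarrow> bool" where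
  "cond_C2 m nc \<theta> \<longleftrightarrow>
     (\<forall>p<m. \<forall>i \<in> {p * (nc - 1) + 1 .. (p + 1) * (nc - 1)}.
        \<forall>j \<in> {p * (nc - 1) + 1 .. (p + 1) * (nc - 1)}.
          cong_2pi (\<theta> i - \<theta> (i + 1)) (\<theta> j - \<theta> (j + 1)))"

definition hc_configs :: "nat \<Rightarrow> nat \<Rightarrow> (nat \<Rightarrow> real) set" where
  "hc_configs m nc = {\<theta>. cond_C1 m nc \<theta> \<and> cond_C2 m nc \<theta>}"

definition rot_rel :: "nat \<Rightarrow> nat \<Rightarrow> ((nat \<Rightarrow> real) \<times> (nat \<Rightarrow> real)) set" where
  "rot_rel m nc = {(\<theta>, \<phi>). \<exists>r::real. \<forall>i \<in> hc_V m nc. cong_2pi (\<theta> i) (\<phi> i + r)}"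

text \<open>Jacobian of the Kuramoto vector field at \<theta> (row/column index i-1 for vertex i).\<close>
definition kuramoto_jac :: "nat \<Rightarrow> nat \<Rightarrow> real \<Rightarrow> (nat \<Rightarrow> real) \<Rightarrow> real mat" where
  "kuramoto_jac m nc c \<theta> = mat (hc_n m nc) (hc_n m nc) (\<lambda>(i, j).
     if i = j then - (\<Sum>k = 1 .. hc_n m nc. hc_adj m nc c (i + 1) k * cos (\<theta> k - \<theta> (i + 1)))
     else hc_adj m nc c (i + 1) (j + 1) * cos (\<theta> (j + 1) - \<theta> (i + 1)))"

end

(*
  A configuration satisfying (C1) and (C2) is determined, up to a common rotation, by one integer
  label k p with |k p| <= ceil(nc/4) - 1 for each cycle p: the phase drops by 2 pi k p / nc along
  every path edge of the cycle and, modulo 2 pi, along its closing chord. This gives the count.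
  In such a configuration every cycle carries the same sine coupling sin (2 pi k p / nc) around
  itself, so at each vertex the contributions of its two neighbours on each cycle cancel and all
  phase velocities equal the common natural frequency.

  The Jacobian is the negated Laplacian of the graph weighted by c cos (theta j - theta i), and
  (C1) keeps these angles below pi / 2, so all weights are positive. A connected graph with
  positive symmetric weights has a negative semidefinite Laplacian whose kernel is spanned by
  (1, ..., 1); by symmetry the kernel of its square is the same, so 0 is a simple root of the
  characteristic polynomial.
*)

theory Submission
  imports Defs "Jordan_Normal_Form.Jordan_Normal_Form_Uniqueness" "Jordan_Normal_Form.Jordan_Normal_Form_Existence"
begin

(* HOL-Algebra, loaded by Jordan_Normal_Form, would otherwise capture "order" in the statement. *)
hide_const (open) Coset.order

section \<open>Weighted Laplacian matrices\<close>

text \<open>The negative of the weighted graph Laplacian, matching the sign of the Kuramoto Jacobian.\<close>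

definition laplacian_mat :: "nat \<Rightarrow> (nat \<Rightarrow> nat \<Rightarrow> real) \<Rightarrow> real mat" where
  "laplacian_mat n W = mat n n (\<lambda>(i, j). if i = j then - (\<Sum>k<n. W i k) else W i j)"

lemma laplacian_mult_vec:
  fixes v :: "'a::real_algebra_1 vec"
  assumes v: "v \<in> carrier_vec n" and i: "i < n" and diag: "W i i = 0"
  shows "(map_mat of_real (laplacian_mat n W) *\<^sub>v v) $ i = (\<Sum>j<n. of_real (W i j) * (v$j - v$i))"
proof -
  have "(map_mat of_real (laplacian_mat n W) *\<^sub>v v) $ i
      = (\<Sum>j<n. of_real (W i j) * v$j - (if i = j then of_real (\<Sum>k<n. W i k) * v$i else 0))"
    using v i diag unfolding laplacian_mat_def mult_mat_vec_def scalar_prod_def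
    by (auto simp: lessThan_atLeast0 intro!: sum.cong)
  also have "\<dots> = (\<Sum>j<n. of_real (W i j) * (v$j - v$i))"
    using i by (simp add: sum_subtractf algebra_simps sum_distrib_right)
  finally show ?thesis .
qed

lemma laplacian_mult_ones:
  assumes diag: "\<And>i. i < n \<Longrightarrow> W i i = 0"
  shows "laplacian_mat n W *\<^sub>v vec n (\<lambda>_. 1) = 0\<^sub>v n"
proof (rule eq_vecI)
  fix i assume "i < dim_vec (0\<^sub>v n :: real vec)"
  then have i: "i < n" by simp
  have L: "laplacian_mat n W = map_mat of_real (laplacian_mat n W)"
    by (intro eq_matI) (auto simp: laplacian_mat_def)
  have "(laplacian_mat n W *\<^sub>v vec n (\<lambda>_. 1)) $ i
      = (\<Sum>j<n. of_real (W i j) * (vec n (\<lambda>_. 1::real) $ j - vec n (\<lambda>_. 1) $ i))"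
    by (subst L, rule laplacian_mult_vec) (simp_all add: i diag)
  also have "\<dots> = 0\<^sub>v n $ i" using i by simp
  finally show "(laplacian_mat n W *\<^sub>v vec n (\<lambda>_. 1)) $ i = 0\<^sub>v n $ i" .
qed (simp add: laplacian_mat_def)

lemma cnj_mult_self: "cnj z * z = complex_of_real ((cmod z)\<^sup>2)"
  by (metis complex_norm_square mult.commute)

lemma laplacian_quadratic_form:
  fixes v :: "complex vec"
  assumes v: "v \<in> carrier_vec n"
    and sym: "\<And>i j. i < n \<Longrightarrow> j < n \<Longrightarrow> W i j = W j i"
    and diag: "\<And>i. i < n \<Longrightarrow> W i i = 0"
  shows "(\<Sum>i<n. cnj (v$i) * (map_mat of_real (laplacian_mat n W) *\<^sub>v v) $ i)
     = - of_real ((\<Sum>i<n. \<Sum>j<n. W i j * (cmod (v$i - v$j))\<^sup>2) / 2)"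
proof -
  define S where "S = (\<Sum>i<n. \<Sum>j<n. of_real (W i j) * (cnj (v$i) * (v$j - v$i)))"
  have lhs: "(\<Sum>i<n. cnj (v$i) * (map_mat of_real (laplacian_mat n W) *\<^sub>v v) $ i) = S"
    unfolding S_def
    by (intro sum.cong refl) (simp add: laplacian_mult_vec[OF v _ diag] sum_distrib_left algebra_simps)
  have swap: "S = (\<Sum>i<n. \<Sum>j<n. of_real (W i j) * (cnj (v$j) * (v$i - v$j)))"
    unfolding S_def by (subst sum.swap) (auto intro!: sum.cong simp: sym)
  have pair: "of_real (W i j) * (cnj (v$i) * (v$j - v$i)) + of_real (W i j) * (cnj (v$j) * (v$i - v$j))
      = - of_real (W i j * (cmod (v$i - v$j))\<^sup>2)" for i j
  proof -
    have "of_real (W i j) * (cnj (v$i) * (v$j - v$i)) + of_real (W i j) * (cnj (v$j) * (v$i - v$j))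
        = - (of_real (W i j) * (cnj (v$i - v$j) * (v$i - v$j)))"
      by (simp add: algebra_simps)
    then show ?thesis by (simp only: cnj_mult_self of_real_mult)
  qed
  have "S + S = - of_real (\<Sum>i<n. \<Sum>j<n. W i j * (cmod (v$i - v$j))\<^sup>2)"
    by (subst (2) swap) (simp add: S_def pair sum_negf flip: sum.distrib)
  then show ?thesis using lhs by (simp add: field_simps)
qed

lemma eigenvalue_laplacian_mat:
  assumes sym: "\<And>i j. i < n \<Longrightarrow> j < n \<Longrightarrow> W i j = W j i"
    and diag: "\<And>i. i < n \<Longrightarrow> W i i = 0"
    and nonneg: "\<And>i j. i < n \<Longrightarrow> j < n \<Longrightarrow> W i j \<ge> 0"
    and ev: "eigenvalue (map_mat complex_of_real (laplacian_mat n W)) e"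
  shows "e = 0 \<or> (Im e = 0 \<and> Re e < 0)"
proof -
  from ev obtain v where v: "v \<in> carrier_vec n" "v \<noteq> 0\<^sub>v n"
      and Av: "map_mat complex_of_real (laplacian_mat n W) *\<^sub>v v = e \<cdot>\<^sub>v v"
    unfolding eigenvalue_def eigenvector_def by (auto simp: laplacian_mat_def)
  define Q where "Q = (\<Sum>i<n. \<Sum>j<n. W i j * (cmod (v$i - v$j))\<^sup>2)"
  define N where "N = (\<Sum>i<n. (cmod (v$i))\<^sup>2)"
  have "Q \<ge> 0" unfolding Q_def using nonneg by (auto intro!: sum_nonneg)
  obtain i0 where i0: "i0 < n" "v $ i0 \<noteq> 0"
    using v by (metis eq_vecI carrier_vecD index_zero_vec)
  have "(cmod (v$i0))\<^sup>2 \<le> N" unfolding N_def by (rule member_le_sum) (use i0 in auto)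
  with i0 have "N > 0" by (smt (verit) norm_eq_zero zero_less_power2)
  have "e * of_real N = (\<Sum>i<n. e * (cnj (v$i) * v$i))"
    by (simp add: N_def sum_distrib_left cnj_mult_self)
  also have "\<dots> = (\<Sum>i<n. cnj (v$i) * (map_mat complex_of_real (laplacian_mat n W) *\<^sub>v v) $ i)"
    using v Av by (intro sum.cong refl) simp
  also have "\<dots> = - of_real (Q / 2)"
    unfolding Q_def by (rule laplacian_quadratic_form[OF v(1) sym diag])
  finally have "e = of_real (- Q / (2 * N))" using \<open>N > 0\<close> by (simp add: field_simps)
  then show ?thesis using \<open>Q \<ge> 0\<close> \<open>N > 0\<close> by (cases "Q = 0") (simp_all add: divide_pos_pos)
qed

lemma laplacian_kernel_const:
  assumes sym: "\<And>i j. i < n \<Longrightarrow> j < n \<Longrightarrow> W i j = W j i"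
    and diag: "\<And>i. i < n \<Longrightarrow> W i i = 0"
    and nonneg: "\<And>i j. i < n \<Longrightarrow> j < n \<Longrightarrow> W i j \<ge> 0"
    and path: "\<And>i. Suc i < n \<Longrightarrow> W i (Suc i) > 0"
    and v: "v \<in> carrier_vec n"
    and Av: "map_mat complex_of_real (laplacian_mat n W) *\<^sub>v v = 0\<^sub>v n"
  shows "v = (v $ 0) \<cdot>\<^sub>v vec n (\<lambda>_. 1)"
proof -
  define Q where "Q = (\<Sum>i<n. \<Sum>j<n. W i j * (cmod (v$i - v$j))\<^sup>2)"
  have "- of_real (Q / 2) = (\<Sum>i<n. cnj (v$i) * (map_mat complex_of_real (laplacian_mat n W) *\<^sub>v v) $ i)"
    unfolding Q_def by (rule laplacian_quadratic_form[OF v sym diag, symmetric])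
  also have "\<dots> = 0" using Av by simp
  finally have "Q = 0" by simp
  have row_nonneg: "\<forall>i\<in>{..<n}. 0 \<le> (\<Sum>j<n. W i j * (cmod (v$i - v$j))\<^sup>2)"
    by (auto intro!: sum_nonneg simp: nonneg)
  then have rows: "\<forall>i\<in>{..<n}. (\<Sum>j<n. W i j * (cmod (v$i - v$j))\<^sup>2) = 0"
    using \<open>Q = 0\<close> sum_nonneg_eq_0_iff[OF finite_lessThan row_nonneg[rule_format]] by (simp add: Q_def)
  have edge_zero: "W i j * (cmod (v$i - v$j))\<^sup>2 = 0" if "i < n" "j < n" for i j
  proof -
    have terms_nonneg: "\<forall>j\<in>{..<n}. 0 \<le> W i j * (cmod (v$i - v$j))\<^sup>2"
      using that by (auto simp: nonneg)
    have "(\<Sum>j<n. W i j * (cmod (v$i - v$j))\<^sup>2) = 0" using rows that by simp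
    then have "\<forall>j\<in>{..<n}. W i j * (cmod (v$i - v$j))\<^sup>2 = 0"
      using sum_nonneg_eq_0_iff[of "{..<n}" "\<lambda>j. W i j * (cmod (v$i - v$j))\<^sup>2"] terms_nonneg by blast
    then show ?thesis using that by blast
  qed
  have step: "v $ i = v $ Suc i" if "Suc i < n" for i
    using edge_zero[of i "Suc i"] path[OF that] that by auto
  have const: "v $ i = v $ 0" if "i < n" for i
    using that by (induction i) (auto simp: step)
  show ?thesis
  proof (rule eq_vecI)
    fix i assume "i < dim_vec ((v $ 0) \<cdot>\<^sub>v vec n (\<lambda>_. 1))"
    then show "v $ i = ((v $ 0) \<cdot>\<^sub>v vec n (\<lambda>_. 1)) $ i" using const[of i] by simp
  qed (use v in simp)
qed

lemma sym_mat_kernel_square: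
  fixes A :: "real mat"
  assumes A: "A \<in> carrier_mat n n" and sym: "\<And>i j. i < n \<Longrightarrow> j < n \<Longrightarrow> A $$ (i, j) = A $$ (j, i)"
    and v: "v \<in> carrier_vec n"
    and AAv: "map_mat complex_of_real A *\<^sub>v (map_mat complex_of_real A *\<^sub>v v) = 0\<^sub>v n"
  shows "map_mat complex_of_real A *\<^sub>v v = 0\<^sub>v n"
proof -
  define B where "B = map_mat complex_of_real A"
  define u where "u = B *\<^sub>v v"
  have B: "B \<in> carrier_mat n n" using A unfolding B_def by simp
  have u: "u \<in> carrier_vec n" using B v unfolding u_def by simp
  have u_nth: "u $ i = (\<Sum>j<n. B $$ (i, j) * v $ j)" if "i < n" for i
    using that B v unfolding u_def by (auto simp: mult_mat_vec_def scalar_prod_def lessThan_atLeast0)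
  have Bu_nth: "(B *\<^sub>v u) $ j = (\<Sum>i<n. B $$ (j, i) * u $ i)" if "j < n" for j
    using that B u by (auto simp: mult_mat_vec_def scalar_prod_def lessThan_atLeast0)
  have B_sym: "B $$ (i, j) = B $$ (j, i)" "cnj (B $$ (i, j)) = B $$ (i, j)" if "i < n" "j < n" for i j
    using that A sym unfolding B_def by auto
  have "(\<Sum>i<n. cnj (u$i) * u$i) = (\<Sum>i<n. \<Sum>j<n. B $$ (i, j) * cnj (v $ j) * u$i)"
    by (rule sum.cong, simp) (simp add: u_nth sum_distrib_right B_sym)
  also have "\<dots> = (\<Sum>j<n. cnj (v $ j) * (\<Sum>i<n. B $$ (j, i) * u$i))"
    by (subst sum.swap) (auto intro!: sum.cong simp: sum_distrib_left B_sym)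
  also have "\<dots> = 0"
  proof -
    have "(\<Sum>i<n. B $$ (j, i) * u$i) = 0" if "j < n" for j
      using Bu_nth[OF that] AAv[folded B_def u_def] that by (metis index_zero_vec(1))
    then show ?thesis by simp
  qed
  finally have "(\<Sum>i<n. cnj (u$i) * u$i) = 0" .
  moreover have "complex_of_real (\<Sum>i<n. (cmod (u$i))\<^sup>2) = (\<Sum>i<n. cnj (u$i) * u$i)"
    by (simp only: cnj_mult_self of_real_sum)
  ultimately have "(\<Sum>i<n. (cmod (u$i))\<^sup>2) = 0"
    by (metis of_real_eq_0_iff)
  then have "\<forall>i\<in>{..<n}. (cmod (u$i))\<^sup>2 = 0"
    by (subst (asm) sum_nonneg_eq_0_iff) auto
  then show ?thesis using u unfolding u_def[symmetric] B_def[symmetric]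
    by (intro eq_vecI) auto
qed

lemma sum_list_eq_min_1_if_min_2:
  fixes ds :: "nat list"
  assumes "\<forall>d\<in>set ds. d > 0" and "sum_list (map (min 2) ds) = sum_list (map (min 1) ds)"
  shows "sum_list ds = sum_list (map (min 1) ds)"
  using assms
proof (induction ds)
  case (Cons d ds)
  have le: "sum_list (map (min 1) ds) \<le> sum_list (map (min 2) ds)"
    by (induction ds) auto
  from Cons.prems have "d = 1" using le by (cases "d = 1") auto
  with Cons show ?case using le by auto
qed simp

text \<open>If the kernel does not grow from A to A * A, every Jordan block for the eigenvalue 0 has size one.\<close>

lemma order_zero_char_poly_eq_kernel_dim:
  fixes A :: "complex mat"
  assumes A: "A \<in> carrier_mat n n" and ker: "mat_kernel (A * A) = mat_kernel A"
  shows "order 0 (char_poly A) = kernel_dim A"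
proof -
  obtain as where "char_poly A = (\<Prod>a\<leftarrow>as. [:- a, 1:])"
    using char_poly_factorized[OF A] by blast
  from jordan_nf_exists[OF A this] obtain n_as where jnf: "jordan_nf A n_as" ..
  let ?ds = "map fst [(k, e)\<leftarrow>n_as. e = 0]"
  have char0: "char_matrix A 0 = A" unfolding char_matrix_def using A by (intro eq_matI) simp_all
  have pow1: "A ^\<^sub>m 1 = A" using A by simp
  have pow2: "A ^\<^sub>m 2 = A * A" using A by (simp add: numeral_2_eq_2)
  have "dim_gen_eigenspace A 0 2 = dim_gen_eigenspace A 0 1"
    unfolding dim_gen_eigenspace_def char0 pow1 pow2 kernel_dim_def using A ker by simp
  then have min_eq: "sum_list (map (min 2) ?ds) = sum_list (map (min 1) ?ds)"
    unfolding dim_gen_eigenspace[OF jnf] by (simp add: o_def)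
  have pos: "\<forall>d\<in>set ?ds. d > 0"
    using jnf unfolding jordan_nf_def by force
  have "sum_list ?ds = kernel_dim A"
    using sum_list_eq_min_1_if_min_2[OF pos min_eq] dim_gen_eigenspace[OF jnf, of 0 1]
    unfolding dim_gen_eigenspace_def char0 pow1 by (simp add: o_def)
  moreover have "order 0 (char_poly A) = sum_list ?ds"
    unfolding jordan_nf_order[OF jnf] by (metis (mono_tags, lifting) case_prod_beta filter_cong)
  ultimately show ?thesis by simp
qed

lemma kernel_dim_le_1:
  fixes A :: "'a::field mat"
  assumes A: "A \<in> carrier_mat n n" and w: "w \<in> mat_kernel A"
    and multiples: "\<And>v. v \<in> mat_kernel A \<Longrightarrow> \<exists>a. v = a \<cdot>\<^sub>v w"
  shows "kernel_dim A \<le> 1"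
proof -
  interpret K: kernel n n A by unfold_locales (rule A)
  have wK: "{w} \<subseteq> mat_kernel A" using w by simp
  have "K.span {w} = mat_kernel A"
  proof
    show "K.span {w} \<subseteq> mat_kernel A" using K.Ker.span_is_subset2[OF wK] .
    have sub: "submodule class_ring (K.span {w}) K.VK" by (rule K.Ker.span_is_submodule[OF wK])
    have "w \<in> K.span {w}" using K.Ker.in_own_span[OF wK] by blast
    then have "a \<cdot>\<^sub>v w \<in> K.span {w}" for a
      using submodule.smult_closed[OF sub, of a w] by (simp add: class_ring_simps)
    then show "mat_kernel A \<subseteq> K.span {w}" using multiples by blast
  qed
  then have "K.dim \<le> 1" using wK by (intro K.Ker.dim_le1I) auto
  then show ?thesis by simp
qed

lemma order_zero_char_poly_eq_1:
  fixes A :: "complex mat"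
  assumes A: "A \<in> carrier_mat n n"
    and kernel_sq: "\<And>v. v \<in> carrier_vec n \<Longrightarrow> A *\<^sub>v (A *\<^sub>v v) = 0\<^sub>v n \<Longrightarrow> A *\<^sub>v v = 0\<^sub>v n"
    and w: "w \<in> carrier_vec n" "w \<noteq> 0\<^sub>v n" "A *\<^sub>v w = 0\<^sub>v n"
    and multiples: "\<And>v. v \<in> carrier_vec n \<Longrightarrow> A *\<^sub>v v = 0\<^sub>v n \<Longrightarrow> \<exists>a. v = a \<cdot>\<^sub>v w"
  shows "order 0 (char_poly A) = 1"
proof -
  have AA: "A * A \<in> carrier_mat n n" using A by simp
  have "mat_kernel (A * A) = mat_kernel A"
  proof (intro equalityI subsetI)
    fix v assume "v \<in> mat_kernel (A * A)"
    then have v: "v \<in> carrier_vec n" "(A * A) *\<^sub>v v = 0\<^sub>v n" using mat_kernelD[OF AA] by auto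
    then have "A *\<^sub>v (A *\<^sub>v v) = 0\<^sub>v n" using assoc_mult_mat_vec[OF A A v(1)] by simp
    then show "v \<in> mat_kernel A" using kernel_sq v(1) by (intro mat_kernelI[OF A]) auto
  next
    fix v assume "v \<in> mat_kernel A"
    then have v: "v \<in> carrier_vec n" "A *\<^sub>v v = 0\<^sub>v n" using mat_kernelD[OF A] by auto
    have "A *\<^sub>v 0\<^sub>v n = 0\<^sub>v n" using A by (intro eq_vecI) auto
    then have "(A * A) *\<^sub>v v = 0\<^sub>v n" using v assoc_mult_mat_vec[OF A A v(1)] by simp
    then show "v \<in> mat_kernel (A * A)" using v(1) by (intro mat_kernelI[OF AA])
  qed
  then have order_eq: "order 0 (char_poly A) = kernel_dim A"
    by (rule order_zero_char_poly_eq_kernel_dim[OF A])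
  have "kernel_dim A \<le> 1"
  proof (rule kernel_dim_le_1[OF A])
    show "w \<in> mat_kernel A" using w A by (simp add: mat_kernel_def)
    show "\<exists>a. v = a \<cdot>\<^sub>v w" if "v \<in> mat_kernel A" for v
      using that multiples A by (simp add: mat_kernel_def)
  qed
  moreover have "eigenvalue A 0"
    unfolding eigenvalue_def eigenvector_def using w A by (intro exI[of _ w]) auto
  then have "poly (char_poly A) 0 = 0" using eigenvalue_root_char_poly[OF A] by blast
  moreover have "char_poly A \<noteq> 0"
    using degree_monic_char_poly[OF A] by (metis coeff_0 zero_neq_one)
  ultimately show ?thesis using order_eq order_root by (metis le_antisym less_one not_le)
qed

lemma order_zero_char_poly_laplacian:
  assumes sym: "\<And>i j. i < n \<Longrightarrow> j < n \<Longrightarrow> W i j = W j i"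
    and diag: "\<And>i. i < n \<Longrightarrow> W i i = 0"
    and nonneg: "\<And>i j. i < n \<Longrightarrow> j < n \<Longrightarrow> W i j \<ge> 0"
    and path: "\<And>i. Suc i < n \<Longrightarrow> W i (Suc i) > 0"
    and "n > 0"
  shows "order 0 (char_poly (map_mat complex_of_real (laplacian_mat n W))) = 1"
proof -
  let ?L = "laplacian_mat n W"
  define w where "w = vec n (\<lambda>_. 1 :: complex)"
  have L: "?L \<in> carrier_mat n n" by (simp add: laplacian_mat_def)
  have w: "w \<in> carrier_vec n" unfolding w_def by simp
  have "w $ 0 \<noteq> 0\<^sub>v n $ 0" using \<open>n > 0\<close> unfolding w_def by simp
  then have "w \<noteq> 0\<^sub>v n" by metis
  have Lw: "map_mat complex_of_real ?L *\<^sub>v w = 0\<^sub>v n"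
  proof (rule eq_vecI)
    fix i assume "i < dim_vec (0\<^sub>v n :: complex vec)"
    then have i: "i < n" by simp
    show "(map_mat complex_of_real ?L *\<^sub>v w) $ i = 0\<^sub>v n $ i"
      unfolding laplacian_mult_vec[of w n i W, OF w i diag[OF i]] using i by (simp add: w_def)
  qed (simp add: laplacian_mat_def)
  show ?thesis
  proof (rule order_zero_char_poly_eq_1[OF _ _ w \<open>w \<noteq> 0\<^sub>v n\<close> Lw])
    show "map_mat complex_of_real ?L \<in> carrier_mat n n" using L by simp
    show "map_mat complex_of_real ?L *\<^sub>v v = 0\<^sub>v n"
      if "v \<in> carrier_vec n" "map_mat complex_of_real ?L *\<^sub>v (map_mat complex_of_real ?L *\<^sub>v v) = 0\<^sub>v n" for v
      using sym_mat_kernel_square[OF L _ that] sym by (simp add: laplacian_mat_def)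
    show "\<exists>a. v = a \<cdot>\<^sub>v w" if "v \<in> carrier_vec n" "map_mat complex_of_real ?L *\<^sub>v v = 0\<^sub>v n" for v
      using laplacian_kernel_const[OF sym diag nonneg path that] unfolding w_def by blast
  qed
qed

section \<open>Phases modulo 2 pi\<close>

lemma cong_2pi_iff_sin_cos: "cong_2pi x y \<longleftrightarrow> sin x = sin y \<and> cos x = cos y"
proof -
  have "cong_2pi x y \<longleftrightarrow> (\<exists>k::int. x = y + 2 * pi * of_int k)"
    unfolding cong_2pi_def by (rule ex_cong1) linarith
  then show ?thesis using sin_cos_eq_iff[of x y] by simp
qed

lemma cong_2pi_refl: "cong_2pi x x"
  by (simp add: cong_2pi_iff_sin_cos)

lemma cong_2pi_sym: "cong_2pi x y \<Longrightarrow> cong_2pi y x"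
  by (simp add: cong_2pi_iff_sin_cos)

lemma cong_2pi_trans [trans]: "cong_2pi x y \<Longrightarrow> cong_2pi y z \<Longrightarrow> cong_2pi x z"
  by (simp add: cong_2pi_iff_sin_cos)

lemma sin_cong_2pi: "cong_2pi x y \<Longrightarrow> sin x = sin y"
  and cos_cong_2pi: "cong_2pi x y \<Longrightarrow> cos x = cos y"
  by (simp_all add: cong_2pi_iff_sin_cos)

lemma cong_2pi_add: "cong_2pi a b \<Longrightarrow> cong_2pi c d \<Longrightarrow> cong_2pi (a + c) (b + d)"
  unfolding cong_2pi_def
proof (elim exE)
  fix k l :: int assume "a - b = 2 * pi * k" "c - d = 2 * pi * l"
  then have "a + c - (b + d) = 2 * pi * of_int (k + l)" by (simp add: algebra_simps)
  then show "\<exists>j::int. a + c - (b + d) = 2 * pi * j" ..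
qed

lemma cong_2pi_diff: "cong_2pi a b \<Longrightarrow> cong_2pi c d \<Longrightarrow> cong_2pi (a - c) (b - d)"
  unfolding cong_2pi_def
proof (elim exE)
  fix k l :: int assume "a - b = 2 * pi * k" "c - d = 2 * pi * l"
  then have "a - c - (b - d) = 2 * pi * of_int (k - l)" by (simp add: algebra_simps)
  then show "\<exists>j::int. a - c - (b - d) = 2 * pi * j" ..
qed

lemma label_bound_less_quarter:
  fixes k :: int
  assumes "\<bar>k\<bar> \<le> \<lceil>real nc / 4\<rceil> - 1"
  shows "real_of_int \<bar>k\<bar> < real nc / 4"
proof -
  have "real_of_int \<bar>k\<bar> \<le> of_int \<lceil>real nc / 4\<rceil> - 1" using assms by linarith
  then show ?thesis using ceiling_correct[of "real nc / 4"] by linarith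
qed

lemma cos_label_angle_pos:
  fixes k :: int
  assumes "nc > 0" and "\<bar>k\<bar> \<le> \<lceil>real nc / 4\<rceil> - 1"
  shows "cos (2 * pi * of_int k / real nc) > 0"
proof (rule cos_gt_zero_pi)
  have "\<bar>2 * pi * of_int k / real nc\<bar> < pi / 2"
    using label_bound_less_quarter[OF assms(2)] assms(1) by (simp add: abs_mult field_simps)
  then show "- (pi / 2) < 2 * pi * of_int k / real nc" "2 * pi * of_int k / real nc < pi / 2"
    by linarith+
qed

lemma label_angle_cong_2pi_eq:
  fixes k l :: int
  assumes "nc > 0" "\<bar>k\<bar> \<le> \<lceil>real nc / 4\<rceil> - 1" "\<bar>l\<bar> \<le> \<lceil>real nc / 4\<rceil> - 1"
    and "cong_2pi (2 * pi * of_int k / real nc) (2 * pi * of_int l / real nc)"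
  shows "k = l"
proof -
  from assms(4) obtain j :: int where "2 * pi * of_int k / real nc - 2 * pi * of_int l / real nc = 2 * pi * of_int j"
    unfolding cong_2pi_def by blast
  then have "2 * pi * (of_int k - of_int l) = 2 * pi * (real nc * of_int j)"
    using assms(1) by (simp add: field_simps)
  then have "of_int k - of_int l = real nc * of_int j" by simp
  then have kl: "k - l = int nc * j" by (metis of_int_diff of_int_eq_iff of_int_mult of_int_of_nat_eq)
  have "real_of_int \<bar>k - l\<bar> < real nc"
    using label_bound_less_quarter[OF assms(2)] label_bound_less_quarter[OF assms(3)] by linarith
  then have "\<bar>k - l\<bar> < int nc" by linarith
  then have "int nc * \<bar>j\<bar> < int nc * 1" using kl by (simp add: abs_mult)
  then have "\<bar>j\<bar> < 1" using mult_less_cancel_left_pos[of "int nc" "\<bar>j\<bar>" 1] assms(1) by simp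
  then have "j = 0" by simp
  then show ?thesis using kl by simp
qed

section \<open>The honeycomb network\<close>

lemma div_eq_of_bounds:
  fixes N :: nat
  assumes "p * N \<le> q" "q < Suc p * N"
  shows "q div N = p"
  using assms by (metis div_nat_eqI mult.commute)

lemma vertex_block_bounds:
  fixes N t :: nat
  assumes "N > 0" "t \<ge> 1"
  shows "(t - 1) div N * N + 1 \<le> t" "t \<le> ((t - 1) div N + 1) * N"
proof -
  show "(t - 1) div N * N + 1 \<le> t" using div_times_less_eq_dividend[of "t - 1" N] assms(2) by linarith
  have "t - 1 < N + (t - 1) div N * N" using assms(1) by (rule dividend_less_div_times)
  then show "t \<le> ((t - 1) div N + 1) * N" by simp
qed

lemma hc_adjacent_iff:
  assumes nc: "nc \<ge> 5" and i: "1 \<le> i" "i \<le> hc_n m nc"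
  shows "(hc_edge m nc i j \<or> hc_edge m nc j i) \<longleftrightarrow>
     (i \<le> m * (nc - 1) \<and> j = i + 1) \<or> ((\<exists>p<m. i = p * (nc - 1) + 1) \<and> j = i + (nc - 1))
      \<or> (2 \<le> i \<and> j = i - 1) \<or> ((\<exists>p<m. i = p * (nc - 1) + 1 + (nc - 1)) \<and> j = i - (nc - 1))"
proof -
  have out: "hc_edge m nc i j \<longleftrightarrow>
      (i \<le> m * (nc - 1) \<and> j = i + 1) \<or> ((\<exists>p<m. i = p * (nc - 1) + 1) \<and> j = i + (nc - 1))"
    unfolding hc_edge_def using i nc by auto
  have "hc_edge m nc j i \<longleftrightarrow>
      (2 \<le> i \<and> j = i - 1) \<or> ((\<exists>p<m. i = p * (nc - 1) + 1 + (nc - 1)) \<and> j = i - (nc - 1))"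
  proof
    assume "hc_edge m nc j i"
    then consider "1 \<le> j" "i = j + 1" | p where "p < m" "j = p * (nc - 1) + 1" "i = j + nc - 1"
      unfolding hc_edge_def by blast
    then show "(2 \<le> i \<and> j = i - 1) \<or> ((\<exists>p<m. i = p * (nc - 1) + 1 + (nc - 1)) \<and> j = i - (nc - 1))"
    proof cases
      case (2 p)
      then have "i = p * (nc - 1) + 1 + (nc - 1)" "j = i - (nc - 1)" using nc by auto
      then show ?thesis using 2(1) by blast
    qed auto
  next
    assume "(2 \<le> i \<and> j = i - 1) \<or> ((\<exists>p<m. i = p * (nc - 1) + 1 + (nc - 1)) \<and> j = i - (nc - 1))"
    then show "hc_edge m nc j i"
    proof
      assume "2 \<le> i \<and> j = i - 1"
      then show ?thesis using i unfolding hc_edge_def hc_n_def by auto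
    next
      assume h: "(\<exists>p<m. i = p * (nc - 1) + 1 + (nc - 1)) \<and> j = i - (nc - 1)"
      then obtain p where p: "p < m" "i = p * (nc - 1) + 1 + (nc - 1)" by blast
      then have "j = p * (nc - 1) + 1" "i = j + nc - 1" using h nc by auto
      then show ?thesis using p(1) unfolding hc_edge_def by blast
    qed
  qed
  with out show ?thesis by blast
qed

lemma sum_if_conj_eq:
  fixes h :: "nat \<Rightarrow> real"
  assumes "P \<Longrightarrow> a \<in> S" "finite S"
  shows "(\<Sum>j\<in>S. if P \<and> j = a then h j else 0) = (if P then h a else 0)"
  using assms by (cases P) (simp_all add: sum.delta')

lemma if_disj4_mult:
  fixes c x :: real
  assumes "\<not> (P1 \<and> P2)" "\<not> (P1 \<and> P3)" "\<not> (P1 \<and> P4)" "\<not> (P2 \<and> P3)" "\<not> (P2 \<and> P4)" "\<not> (P3 \<and> P4)"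
  shows "(if P1 \<or> P2 \<or> P3 \<or> P4 then c else 0) * x =
     c * ((if P1 then x else 0) + (if P2 then x else 0) + (if P3 then x else 0) + (if P4 then x else 0))"
  using assms by (cases P1; cases P2; cases P3; cases P4) simp_all

lemma hc_adj_sum:
  fixes h :: "nat \<Rightarrow> real"
  assumes nc: "nc \<ge> 5" and i: "1 \<le> i" "i \<le> hc_n m nc"
  shows "(\<Sum>j = 1 .. hc_n m nc. hc_adj m nc c i j * h j) =
    c * ((if i \<le> m * (nc - 1) then h (i + 1) else 0)
       + (if (\<exists>p<m. i = p * (nc - 1) + 1) then h (i + (nc - 1)) else 0)
       + (if 2 \<le> i then h (i - 1) else 0)
       + (if (\<exists>p<m. i = p * (nc - 1) + 1 + (nc - 1)) then h (i - (nc - 1)) else 0))"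
proof -
  let ?N = "nc - 1"
  let ?A = "i \<le> m * ?N" and ?B = "\<exists>p<m. i = p * ?N + 1" and ?C = "2 \<le> i"
    and ?D = "\<exists>p<m. i = p * ?N + 1 + ?N"
  let ?S = "{1 .. hc_n m nc}"
  have split: "hc_adj m nc c i j * h j = c * ((if ?A \<and> j = i + 1 then h j else 0)
      + (if ?B \<and> j = i + ?N then h j else 0) + (if ?C \<and> j = i - 1 then h j else 0)
      + (if ?D \<and> j = i - ?N then h j else 0))" for j
  proof -
    have "hc_adj m nc c i j = (if (?A \<and> j = i + 1) \<or> (?B \<and> j = i + ?N) \<or> (?C \<and> j = i - 1)
        \<or> (?D \<and> j = i - ?N) then c else 0)"
      unfolding hc_adj_def hc_adjacent_iff[OF nc i, of j] ..
    moreover have "?D \<Longrightarrow> i - 1 \<noteq> i - ?N" using nc by auto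
    ultimately show ?thesis
      by (simp only:) (rule if_disj4_mult; use nc in auto)
  qed
  have "?B \<Longrightarrow> i + ?N \<in> ?S"
  proof -
    assume ?B then obtain p where p: "p < m" "i = p * ?N + 1" by blast
    have "(p + 1) * ?N \<le> m * ?N" using p by (intro mult_le_mono1) simp
    then show ?thesis using p unfolding hc_n_def by simp
  qed
  moreover have "?A \<Longrightarrow> i + 1 \<in> ?S" "?C \<Longrightarrow> i - 1 \<in> ?S" "?D \<Longrightarrow> i - ?N \<in> ?S"
    using i(2) unfolding hc_n_def by auto
  ultimately show ?thesis
    by (simp only: split sum_distrib_left[symmetric] sum.distrib sum_if_conj_eq finite_atLeastAtMost)
qed

lemma hc_interior_vertex:
  fixes nc m q \<rho> :: nat
  assumes \<rho>: "0 < \<rho>" "\<rho> < nc - 1" and q: "q < m"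
  defines "i \<equiv> q * (nc - 1) + 1 + \<rho>"
  shows "i \<le> m * (nc - 1)" "\<not> (\<exists>p<m. i = p * (nc - 1) + 1)" "2 \<le> i"
    "\<not> (\<exists>p<m. i = p * (nc - 1) + 1 + (nc - 1))"
proof -
  let ?N = "nc - 1"
  have not_multiple: "q * ?N + \<rho> \<noteq> p * ?N" for p
  proof
    assume "q * ?N + \<rho> = p * ?N"
    then have "(q * ?N + \<rho>) mod ?N = 0" by simp
    then show False using \<rho> by simp
  qed
  have "(q + 1) * ?N \<le> m * ?N" using q by (intro mult_le_mono1) simp
  then show "i \<le> m * ?N" using \<rho> unfolding i_def by simp
  show "2 \<le> i" using \<rho> unfolding i_def by simp
  show "\<not> (\<exists>p<m. i = p * ?N + 1)"
  proof
    assume "\<exists>p<m. i = p * ?N + 1"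
    then obtain p where "q * ?N + \<rho> = p * ?N" unfolding i_def by auto
    with not_multiple show False by blast
  qed
  show "\<not> (\<exists>p<m. i = p * ?N + 1 + ?N)"
  proof
    assume "\<exists>p<m. i = p * ?N + 1 + ?N"
    then obtain p where "i = p * ?N + 1 + ?N" by blast
    then have "q * ?N + \<rho> = Suc p * ?N" unfolding i_def by simp
    with not_multiple show False by blast
  qed
qed

lemma hc_junction_vertex:
  fixes nc m q :: nat
  assumes nc: "nc \<ge> 5" and q: "q \<le> m"
  defines "i \<equiv> q * (nc - 1) + 1"
  shows "i \<le> m * (nc - 1) \<longleftrightarrow> q < m" "(\<exists>p<m. i = p * (nc - 1) + 1) \<longleftrightarrow> q < m"
    "2 \<le> i \<longleftrightarrow> 0 < q" "(\<exists>p<m. i = p * (nc - 1) + 1 + (nc - 1)) \<longleftrightarrow> 0 < q"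
proof -
  let ?N = "nc - 1"
  show "i \<le> m * ?N \<longleftrightarrow> q < m"
  proof
    assume "i \<le> m * ?N"
    then have "q * ?N < m * ?N" unfolding i_def by linarith
    then show "q < m" by simp
  next
    assume "q < m"
    then have "(q + 1) * ?N \<le> m * ?N" by (intro mult_le_mono1) simp
    then show "i \<le> m * ?N" unfolding i_def using nc by simp
  qed
  show "(\<exists>p<m. i = p * ?N + 1) \<longleftrightarrow> q < m" unfolding i_def using nc by auto
  show "2 \<le> i \<longleftrightarrow> 0 < q" unfolding i_def using nc by (cases q) auto
  have "i = p * ?N + 1 + ?N \<longleftrightarrow> q = Suc p" for p
  proof -
    have "p * ?N + 1 + ?N = Suc p * ?N + 1" by simp
    then have "i = p * ?N + 1 + ?N \<longleftrightarrow> q * ?N = Suc p * ?N" unfolding i_def by linarith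
    also have "\<dots> \<longleftrightarrow> q = Suc p" using mult_cancel2[of q ?N "Suc p"] nc by simp
    finally show ?thesis .
  qed
  then show "(\<exists>p<m. i = p * ?N + 1 + ?N) \<longleftrightarrow> 0 < q" using q by (cases q) auto
qed

lemma rot_rel_equiv: "equiv UNIV (rot_rel m nc)"
proof (rule equivI)
  show "refl (rot_rel m nc)"
    unfolding refl_on_def rot_rel_def by (auto intro!: exI[of _ 0] cong_2pi_refl)
  show "sym (rot_rel m nc)"
  proof (rule symI)
    fix \<theta> \<phi> assume "(\<theta>, \<phi>) \<in> rot_rel m nc"
    then obtain r where r: "\<forall>i\<in>hc_V m nc. cong_2pi (\<theta> i) (\<phi> i + r)" unfolding rot_rel_def by blast
    have "cong_2pi (\<phi> i) (\<theta> i + - r)" if "i \<in> hc_V m nc" for i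
      using cong_2pi_sym[OF cong_2pi_diff[OF r[rule_format, OF that] cong_2pi_refl[of r]]] by simp
    then show "(\<phi>, \<theta>) \<in> rot_rel m nc" unfolding rot_rel_def by blast
  qed
  show "trans (rot_rel m nc)"
  proof (rule transI)
    fix \<theta> \<phi> \<psi> assume "(\<theta>, \<phi>) \<in> rot_rel m nc" "(\<phi>, \<psi>) \<in> rot_rel m nc"
    then obtain r s where r: "\<forall>i\<in>hc_V m nc. cong_2pi (\<theta> i) (\<phi> i + r)"
      and s: "\<forall>i\<in>hc_V m nc. cong_2pi (\<phi> i) (\<psi> i + s)"
      unfolding rot_rel_def by blast
    have "cong_2pi (\<theta> i) (\<psi> i + (s + r))" if "i \<in> hc_V m nc" for i
    proof -
      have "cong_2pi (\<theta> i) (\<phi> i + r)" using r that by blast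
      also have "cong_2pi (\<phi> i + r) (\<psi> i + s + r)"
        using s that by (intro cong_2pi_add cong_2pi_refl) auto
      finally show ?thesis by (simp add: add.assoc)
    qed
    then show "(\<theta>, \<psi>) \<in> rot_rel m nc" unfolding rot_rel_def by blast
  qed
qed simp

lemma rot_rel_cong_diff:
  assumes "(\<theta>, \<phi>) \<in> rot_rel m nc" "i \<in> hc_V m nc" "j \<in> hc_V m nc"
  shows "cong_2pi (\<theta> i - \<theta> j) (\<phi> i - \<phi> j)"
proof -
  obtain r where r: "\<forall>i\<in>hc_V m nc. cong_2pi (\<theta> i) (\<phi> i + r)"
    using assms(1) unfolding rot_rel_def by blast
  have "cong_2pi (\<theta> i - \<theta> j) ((\<phi> i + r) - (\<phi> j + r))"
    using r assms(2,3) by (intro cong_2pi_diff) auto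
  then show ?thesis by simp
qed

lemma rot_rel_if_cong_steps:
  assumes steps: "\<And>t. 1 \<le> t \<Longrightarrow> t < hc_n m nc \<Longrightarrow> cong_2pi (\<theta> t - \<theta> (t + 1)) (\<phi> t - \<phi> (t + 1))"
  shows "(\<theta>, \<phi>) \<in> rot_rel m nc"
proof -
  have telescope: "cong_2pi (\<theta> 1 - \<theta> t) (\<phi> 1 - \<phi> t)" if "1 \<le> t" "t \<le> hc_n m nc" for t
    using that
  proof (induction t rule: dec_induct)
    case (step t)
    have "cong_2pi (\<theta> 1 - \<theta> t + (\<theta> t - \<theta> (t + 1))) (\<phi> 1 - \<phi> t + (\<phi> t - \<phi> (t + 1)))"
      using step steps by (intro cong_2pi_add) auto
    then show ?case by simp
  qed (simp add: cong_2pi_refl)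
  have "cong_2pi (\<theta> i) (\<phi> i + (\<theta> 1 - \<phi> 1))" if "i \<in> hc_V m nc" for i
  proof -
    have "cong_2pi (\<theta> 1 - \<theta> i) (\<phi> 1 - \<phi> i)"
      using that unfolding hc_V_def by (intro telescope) auto
    from cong_2pi_diff[OF cong_2pi_refl[of "\<theta> 1"] this]
    show ?thesis by (simp add: algebra_simps)
  qed
  then show ?thesis unfolding rot_rel_def by blast
qed

section \<open>Representative configurations\<close>

definition cycle_angle :: "nat \<Rightarrow> (nat \<Rightarrow> int) \<Rightarrow> nat \<Rightarrow> real" where
  "cycle_angle nc k p = 2 * pi * of_int (k p) / real nc"

text \<open>The path edge (t, t + 1) lies on cycle (t - 1) div (nc - 1). As nc * cycle_angle nc k p is
  a multiple of 2 pi, the closing chord of cycle p then carries the same phase difference modulo 2 pi.\<close>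

primrec canon_config :: "nat \<Rightarrow> (nat \<Rightarrow> int) \<Rightarrow> nat \<Rightarrow> real" where
  "canon_config nc k 0 = 0"
| "canon_config nc k (Suc t) = canon_config nc k t - cycle_angle nc k ((t - 1) div (nc - 1))"

definition canon_labels :: "nat \<Rightarrow> nat \<Rightarrow> (nat \<Rightarrow> int) set" where
  "canon_labels m nc = PiE {..<m} (\<lambda>_. {-(\<lceil>real nc / 4\<rceil> - 1) .. \<lceil>real nc / 4\<rceil> - 1})"

lemma canon_labels_bound:
  assumes "k \<in> canon_labels m nc" "p < m"
  shows "\<bar>k p\<bar> \<le> \<lceil>real nc / 4\<rceil> - 1"
  using PiE_mem[OF assms(1)[unfolded canon_labels_def], of p] assms(2) by auto

lemma card_canon_labels:
  assumes "nc \<ge> 1"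
  shows "int (card (canon_labels m nc)) = (2 * \<lceil>real nc / 4\<rceil> - 1) ^ m"
proof -
  have "\<lceil>real nc / 4\<rceil> \<ge> 1" using assms by simp
  then show ?thesis unfolding canon_labels_def by (simp add: card_PiE of_nat_power)
qed

lemma canon_config_diff:
  "canon_config nc k t - canon_config nc k (t + 1) = cycle_angle nc k ((t - 1) div (nc - 1))"
  by simp

lemma canon_config_along_cycle:
  assumes "nc \<ge> 2" "s \<le> nc - 1"
  shows "canon_config nc k (p * (nc - 1) + 1) - canon_config nc k (p * (nc - 1) + 1 + s)
    = real s * cycle_angle nc k p"
  using assms(2)
proof (induction s)
  case (Suc s)
  have "(p * (nc - 1) + 1 + s - 1) div (nc - 1) = p"
    using Suc.prems assms(1) by (intro div_eq_of_bounds) auto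
  then have "canon_config nc k (p * (nc - 1) + 1 + s) - canon_config nc k (p * (nc - 1) + 1 + Suc s)
      = cycle_angle nc k p"
    using canon_config_diff[of nc k "p * (nc - 1) + 1 + s"] by simp
  with Suc show ?case by (simp add: algebra_simps)
qed simp

lemma canon_config_chord:
  assumes "nc \<ge> 2"
  shows "cong_2pi (canon_config nc k (p * (nc - 1) + 1 + (nc - 1)) - canon_config nc k (p * (nc - 1) + 1))
    (cycle_angle nc k p)"
proof -
  have "canon_config nc k (p * (nc - 1) + 1 + (nc - 1)) - canon_config nc k (p * (nc - 1) + 1)
      = cycle_angle nc k p - 2 * pi * of_int (k p)"
    using canon_config_along_cycle[OF assms order_refl, of k p] assms
    by (simp add: cycle_angle_def of_nat_diff field_simps)
  then show ?thesis unfolding cong_2pi_def by (intro exI[of _ "- k p"]) simp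
qed

lemma canon_config_cond_C1:
  assumes nc: "nc \<ge> 5" and k: "k \<in> canon_labels m nc"
  shows "cond_C1 m nc (canon_config nc k)"
  unfolding cond_C1_def
proof (intro allI impI)
  let ?N = "nc - 1"
  fix i j assume "hc_edge m nc i j"
  then consider "1 \<le> i" "i \<le> m * ?N" "j = i + 1" | p where "p < m" "i = p * ?N + 1" "j = i + ?N"
    unfolding hc_edge_def using nc by auto
  then show "\<exists>l::int. \<bar>l\<bar> \<le> \<lceil>real nc / 4\<rceil> - 1
      \<and> cong_2pi (canon_config nc k i - canon_config nc k j) (2 * pi * of_int l / real nc)"
  proof cases
    case 1
    have "(i - 1) div ?N < m" using 1 nc by (intro less_mult_imp_div_less) auto
    then show ?thesis
      using 1 canon_labels_bound[OF k] cong_2pi_refl canon_config_diff[of nc k i]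
      unfolding cycle_angle_def by auto
  next
    case 2
    have "cong_2pi (0 - (canon_config nc k j - canon_config nc k i)) (0 - cycle_angle nc k p)"
      using 2 canon_config_chord[of nc k p] nc by (intro cong_2pi_diff cong_2pi_refl) auto
    then have "cong_2pi (canon_config nc k i - canon_config nc k j) (2 * pi * of_int (- k p) / real nc)"
      by (simp add: cycle_angle_def)
    moreover have "\<bar>- k p\<bar> \<le> \<lceil>real nc / 4\<rceil> - 1" using canon_labels_bound[OF k 2(1)] by simp
    ultimately show ?thesis by blast
  qed
qed

lemma canon_config_cond_C2:
  assumes "nc \<ge> 5"
  shows "cond_C2 m nc (canon_config nc k)"
  unfolding cond_C2_def
proof (intro allI impI ballI)
  let ?N = "nc - 1"
  fix p i j assume "p < m" and i: "i \<in> {p * ?N + 1 .. (p + 1) * ?N}" and j: "j \<in> {p * ?N + 1 .. (p + 1) * ?N}"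
  have "(i - 1) div ?N = p" "(j - 1) div ?N = p"
    using i j assms by (auto intro!: div_eq_of_bounds)
  then show "cong_2pi (canon_config nc k i - canon_config nc k (i + 1))
      (canon_config nc k j - canon_config nc k (j + 1))"
    by (simp only: canon_config_diff cong_2pi_refl)
qed

lemma canon_config_in_hc_configs:
  "nc \<ge> 5 \<Longrightarrow> k \<in> canon_labels m nc \<Longrightarrow> canon_config nc k \<in> hc_configs m nc"
  unfolding hc_configs_def by (simp add: canon_config_cond_C1 canon_config_cond_C2)

lemma cond_C1_labels:
  assumes nc: "nc \<ge> 5" and C1: "cond_C1 m nc \<theta>"
  obtains k where "k \<in> canon_labels m nc"
    "\<And>p. p < m \<Longrightarrow> cong_2pi (\<theta> (p * (nc - 1) + 1) - \<theta> (p * (nc - 1) + 1 + 1)) (cycle_angle nc k p)"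
proof -
  let ?N = "nc - 1" and ?K = "\<lceil>real nc / 4\<rceil> - 1"
  have "\<forall>p\<in>{..<m}. \<exists>l. l \<in> {-?K..?K}
      \<and> cong_2pi (\<theta> (p * ?N + 1) - \<theta> (p * ?N + 1 + 1)) (2 * pi * of_int l / real nc)"
  proof
    fix p assume "p \<in> {..<m}"
    then have "(p + 1) * ?N \<le> m * ?N" by (intro mult_le_mono1) simp
    then have "hc_edge m nc (p * ?N + 1) (p * ?N + 1 + 1)" unfolding hc_edge_def using nc by simp
    then obtain l where "\<bar>l\<bar> \<le> ?K"
        "cong_2pi (\<theta> (p * ?N + 1) - \<theta> (p * ?N + 1 + 1)) (2 * pi * of_int l / real nc)"
      using C1 unfolding cond_C1_def by blast
    then show "\<exists>l. l \<in> {-?K..?K}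
        \<and> cong_2pi (\<theta> (p * ?N + 1) - \<theta> (p * ?N + 1 + 1)) (2 * pi * of_int l / real nc)"
      by (intro exI[of _ l]) auto
  qed
  then obtain f where f: "\<forall>p\<in>{..<m}. f p \<in> {-?K..?K}
      \<and> cong_2pi (\<theta> (p * ?N + 1) - \<theta> (p * ?N + 1 + 1)) (2 * pi * of_int (f p) / real nc)"
    by (metis bchoice)
  show ?thesis
  proof (rule that[of "restrict f {..<m}"])
    show "restrict f {..<m} \<in> canon_labels m nc"
      unfolding canon_labels_def using f by (simp add: restrict_PiE_iff)
    show "cong_2pi (\<theta> (p * ?N + 1) - \<theta> (p * ?N + 1 + 1)) (cycle_angle nc (restrict f {..<m}) p)"
      if "p < m" for p
      using f that unfolding cycle_angle_def by auto
  qed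
qed

lemma cond_C2_step:
  assumes nc: "nc \<ge> 5" and C2: "cond_C2 m nc \<theta>" and t: "1 \<le> t" "t < hc_n m nc"
  defines "p \<equiv> (t - 1) div (nc - 1)"
  shows "p < m" "cong_2pi (\<theta> t - \<theta> (t + 1)) (\<theta> (p * (nc - 1) + 1) - \<theta> (p * (nc - 1) + 1 + 1))"
proof -
  let ?N = "nc - 1"
  show "p < m" unfolding p_def using t by (intro less_mult_imp_div_less) (auto simp: hc_n_def)
  moreover have "p * ?N + 1 \<le> t" "t \<le> (p + 1) * ?N"
    unfolding p_def using vertex_block_bounds[of ?N t] nc t by auto
  ultimately show "cong_2pi (\<theta> t - \<theta> (t + 1)) (\<theta> (p * ?N + 1) - \<theta> (p * ?N + 1 + 1))"
    using C2 nc unfolding cond_C2_def by auto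
qed

lemma hc_configs_rot_canon:
  assumes nc: "nc \<ge> 5" and \<theta>: "\<theta> \<in> hc_configs m nc"
  obtains k where "k \<in> canon_labels m nc" "(\<theta>, canon_config nc k) \<in> rot_rel m nc"
proof -
  have C1: "cond_C1 m nc \<theta>" and C2: "cond_C2 m nc \<theta>" using \<theta> unfolding hc_configs_def by auto
  obtain k where k: "k \<in> canon_labels m nc" and angles: "\<And>p. p < m \<Longrightarrow>
      cong_2pi (\<theta> (p * (nc - 1) + 1) - \<theta> (p * (nc - 1) + 1 + 1)) (cycle_angle nc k p)"
    using cond_C1_labels[OF nc C1] by blast
  have "(\<theta>, canon_config nc k) \<in> rot_rel m nc"
  proof (rule rot_rel_if_cong_steps)
    fix t assume "1 \<le> t" "t < hc_n m nc"
    note step = cond_C2_step[OF nc C2 this]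
    from step(2) angles[OF step(1)]
    have "cong_2pi (\<theta> t - \<theta> (t + 1)) (cycle_angle nc k ((t - 1) div (nc - 1)))"
      by (rule cong_2pi_trans)
    then show "cong_2pi (\<theta> t - \<theta> (t + 1)) (canon_config nc k t - canon_config nc k (t + 1))"
      unfolding canon_config_diff .
  qed
  with k show ?thesis by (rule that)
qed

lemma canon_config_rot_inj:
  assumes nc: "nc \<ge> 5" and k: "k \<in> canon_labels m nc" and l: "l \<in> canon_labels m nc"
    and rot: "(canon_config nc k, canon_config nc l) \<in> rot_rel m nc"
  shows "k = l"
proof (rule PiE_ext[OF k[unfolded canon_labels_def] l[unfolded canon_labels_def]])
  fix p assume "p \<in> {..<m}"
  then have p: "p < m" by simp
  let ?i = "p * (nc - 1) + 1"
  have "(p + 1) * (nc - 1) \<le> m * (nc - 1)" using p by (intro mult_le_mono1) simp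
  moreover have "(p + 1) * (nc - 1) = p * (nc - 1) + (nc - 1)" by simp
  ultimately have "?i + 1 \<le> m * (nc - 1) + 1" using nc by linarith
  then have "?i \<in> hc_V m nc" "?i + 1 \<in> hc_V m nc" using p unfolding hc_V_def hc_n_def by auto
  then have "cong_2pi (canon_config nc k ?i - canon_config nc k (?i + 1))
      (canon_config nc l ?i - canon_config nc l (?i + 1))"
    by (rule rot_rel_cong_diff[OF rot])
  moreover have "(?i - 1) div (nc - 1) = p" using nc by simp
  ultimately have "cong_2pi (cycle_angle nc k p) (cycle_angle nc l p)"
    by (simp only: canon_config_diff)
  then show "k p = l p"
    using nc canon_labels_bound[OF k p] canon_labels_bound[OF l p]
    unfolding cycle_angle_def by (intro label_angle_cong_2pi_eq) auto
qed

lemma card_hc_configs_quotient: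
  assumes nc: "nc \<ge> 5"
  shows "card (hc_configs m nc // rot_rel m nc) = card (canon_labels m nc)"
proof -
  let ?R = "rot_rel m nc"
  have "bij_betw (\<lambda>k. ?R `` {canon_config nc k}) (canon_labels m nc) (hc_configs m nc // ?R)"
  proof (rule bij_betwI')
    fix k l assume "k \<in> canon_labels m nc" "l \<in> canon_labels m nc"
    then show "(?R `` {canon_config nc k} = ?R `` {canon_config nc l}) = (k = l)"
      using canon_config_rot_inj[OF nc] eq_equiv_class_iff[OF rot_rel_equiv] by blast
  next
    fix k assume "k \<in> canon_labels m nc"
    then show "?R `` {canon_config nc k} \<in> hc_configs m nc // ?R"
      using canon_config_in_hc_configs[OF nc] by (auto intro: quotientI)
  next
    fix X assume "X \<in> hc_configs m nc // ?R"
    then obtain \<theta> where \<theta>: "\<theta> \<in> hc_configs m nc" "X = ?R `` {\<theta>}" by (auto elim: quotientE)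
    obtain k where "k \<in> canon_labels m nc" "(\<theta>, canon_config nc k) \<in> ?R"
      using hc_configs_rot_canon[OF nc \<theta>(1)] .
    then show "\<exists>k\<in>canon_labels m nc. X = ?R `` {canon_config nc k}"
      using \<theta>(2) equiv_class_eq[OF rot_rel_equiv] by blast
  qed
  then show ?thesis by (rule bij_betw_same_card[symmetric])
qed

section \<open>Phase locking\<close>

lemma sin_canon_config_succ:
  "sin (canon_config nc k (t + 1) - canon_config nc k t) = - sin (cycle_angle nc k ((t - 1) div (nc - 1)))"
  using canon_config_diff[of nc k t] by (metis minus_diff_eq sin_minus)

lemma sin_canon_config_pred:
  assumes "t \<ge> 2"
  shows "sin (canon_config nc k (t - 1) - canon_config nc k t) = sin (cycle_angle nc k ((t - 2) div (nc - 1)))"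
proof -
  have "canon_config nc k (t - 1) - canon_config nc k (t - 1 + 1) = cycle_angle nc k ((t - 1 - 1) div (nc - 1))"
    by (rule canon_config_diff)
  moreover have "t - 1 + 1 = t" "t - 1 - 1 = t - 2" using assms by auto
  ultimately show ?thesis by simp
qed

lemma sin_canon_config_chord:
  assumes "nc \<ge> 2"
  shows "sin (canon_config nc k (p * (nc - 1) + 1 + (nc - 1)) - canon_config nc k (p * (nc - 1) + 1))
      = sin (cycle_angle nc k p)"
    and "sin (canon_config nc k (p * (nc - 1) + 1) - canon_config nc k (p * (nc - 1) + 1 + (nc - 1)))
      = - sin (cycle_angle nc k p)"
  using sin_cong_2pi[OF canon_config_chord[OF assms]] by (simp_all, metis minus_diff_eq sin_minus)

lemma canon_config_balance_interior:
  assumes nc: "nc \<ge> 5" and \<rho>: "0 < \<rho>" "\<rho> < nc - 1" and q: "q < m"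
  defines "i \<equiv> q * (nc - 1) + 1 + \<rho>"
  shows "(\<Sum>j = 1 .. hc_n m nc. hc_adj m nc c i j * sin (canon_config nc k j - canon_config nc k i)) = 0"
proof -
  note vertex = hc_interior_vertex[OF \<rho> q, folded i_def]
  have i_bounds: "1 \<le> i" "i \<le> hc_n m nc" using vertex(1) unfolding i_def hc_n_def by auto
  have "(i - 1) div (nc - 1) = q" "(i - 2) div (nc - 1) = q"
    using \<rho> unfolding i_def by (auto intro!: div_eq_of_bounds)
  then have cancel: "sin (canon_config nc k (i + 1) - canon_config nc k i)
      + sin (canon_config nc k (i - 1) - canon_config nc k i) = 0"
    using sin_canon_config_succ[of nc k i] sin_canon_config_pred[OF vertex(3), of nc k] by simp
  show ?thesis
    unfolding hc_adj_sum[OF nc i_bounds]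
    by (simp only: if_P[OF vertex(1)] if_P[OF vertex(3)] if_not_P[OF vertex(2)]
        if_not_P[OF vertex(4)] add_0_right cancel mult_zero_right)
qed

lemma canon_config_balance_junction:
  assumes nc: "nc \<ge> 5" and q: "q \<le> m"
  defines "i \<equiv> q * (nc - 1) + 1"
  shows "(\<Sum>j = 1 .. hc_n m nc. hc_adj m nc c i j * sin (canon_config nc k j - canon_config nc k i)) = 0"
proof -
  let ?N = "nc - 1"
  let ?h = "\<lambda>j. sin (canon_config nc k j - canon_config nc k i)"
  have i_bounds: "1 \<le> i" "i \<le> hc_n m nc"
    using q unfolding i_def hc_n_def by (auto intro: mult_le_mono1)
  have fwd: "?h (i + 1) + ?h (i + ?N) = 0" if "q < m"
  proof -
    have "(i - 1) div ?N = q" using nc unfolding i_def by simp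
    then show ?thesis
      using sin_canon_config_succ[of nc k i] sin_canon_config_chord(1)[of nc k q] nc unfolding i_def by simp
  qed
  have bwd: "?h (i - 1) + ?h (i - ?N) = 0" if q_pos: "0 < q"
  proof -
    obtain p where p: "q = Suc p" using q_pos by (cases q) auto
    have i_eq: "i = p * ?N + 1 + ?N" "i - ?N = p * ?N + 1" unfolding i_def p by simp_all
    have "(i - 2) div ?N = p" unfolding i_eq(1) using nc by (intro div_eq_of_bounds) auto
    moreover have "2 \<le> i" using nc unfolding i_eq(1) by simp
    ultimately show ?thesis
      using sin_canon_config_pred[of i nc k] sin_canon_config_chord(2)[of nc k p] nc
      unfolding i_eq(2) by (simp add: i_eq(1))
  qed
  have fwd': "(if q < m then ?h (i + 1) else 0) + (if q < m then ?h (i + ?N) else 0) = 0"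
    by (cases "q < m") (simp_all only: if_True if_False fwd add_0_left)
  have bwd': "(if 0 < q then ?h (i - 1) else 0) + (if 0 < q then ?h (i - ?N) else 0) = 0"
    by (cases "0 < q") (simp_all only: if_True if_False bwd add_0_left)
  show ?thesis
    unfolding hc_adj_sum[OF nc i_bounds] hc_junction_vertex[OF nc q, folded i_def]
    by (simp only: fwd' add_0_left bwd' mult_zero_right)
qed

lemma canon_config_balance:
  assumes nc: "nc \<ge> 5" and i: "1 \<le> i" "i \<le> hc_n m nc"
  shows "(\<Sum>j = 1 .. hc_n m nc. hc_adj m nc c i j * sin (canon_config nc k j - canon_config nc k i)) = 0"
proof -
  let ?N = "nc - 1"
  define q where "q = (i - 1) div ?N"
  define \<rho> where "\<rho> = (i - 1) mod ?N"
  have i_eq: "i = q * ?N + 1 + \<rho>"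
    unfolding q_def \<rho>_def using i div_mult_mod_eq[of "i - 1" ?N] by linarith
  have "\<rho> < ?N" unfolding \<rho>_def using nc by simp
  have "q * ?N + \<rho> \<le> m * ?N" using i(2) unfolding i_eq hc_n_def by simp
  show ?thesis
  proof (cases "\<rho> = 0")
    case True
    then have "q \<le> m" using \<open>q * ?N + \<rho> \<le> m * ?N\<close> nc by simp
    then show ?thesis using canon_config_balance_junction[OF nc] i_eq True by simp
  next
    case False
    have "q * ?N < m * ?N" using False \<open>q * ?N + \<rho> \<le> m * ?N\<close> by linarith
    then have "q < m" by simp
    then show ?thesis
      using canon_config_balance_interior[OF nc _ \<open>\<rho> < ?N\<close>] i_eq False by simp
  qed
qed

lemma hc_configs_phase_locked:
  assumes nc: "nc \<ge> 5" and \<omega>: "\<forall>i \<in> hc_V m nc. \<forall>j \<in> hc_V m nc. \<omega> i = \<omega> j"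
    and \<theta>: "\<theta> \<in> hc_configs m nc"
  shows "phase_locked m nc c \<omega> \<theta>"
proof -
  obtain k where "k \<in> canon_labels m nc" and rot: "(\<theta>, canon_config nc k) \<in> rot_rel m nc"
    using hc_configs_rot_canon[OF nc \<theta>] .
  have rhs: "kuramoto_rhs m nc c \<omega> \<theta> i = \<omega> i" if i: "i \<in> hc_V m nc" for i
  proof -
    have "(\<Sum>j = 1 .. hc_n m nc. hc_adj m nc c i j * sin (\<theta> j - \<theta> i))
        = (\<Sum>j = 1 .. hc_n m nc. hc_adj m nc c i j * sin (canon_config nc k j - canon_config nc k i))"
    proof (rule sum.cong[OF refl])
      fix j assume "j \<in> {1 .. hc_n m nc}"
      then have "j \<in> hc_V m nc" unfolding hc_V_def .
      from sin_cong_2pi[OF rot_rel_cong_diff[OF rot this i]] show "hc_adj m nc c i j * sin (\<theta> j - \<theta> i)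
          = hc_adj m nc c i j * sin (canon_config nc k j - canon_config nc k i)" by simp
    qed
    also have "\<dots> = 0" using i unfolding hc_V_def by (intro canon_config_balance[OF nc]) auto
    finally show ?thesis unfolding kuramoto_rhs_def by simp
  qed
  show ?thesis unfolding phase_locked_def
  proof (intro ballI)
    fix i j assume i: "i \<in> hc_V m nc" and j: "j \<in> hc_V m nc"
    then have "\<omega> i = \<omega> j" using \<omega> by blast
    then show "kuramoto_rhs m nc c \<omega> \<theta> i = kuramoto_rhs m nc c \<omega> \<theta> j"
      using rhs[OF i] rhs[OF j] by simp
  qed
qed

section \<open>Linearization\<close>

lemma cond_C1_cos_pos:
  assumes "cond_C1 m nc \<theta>" "hc_edge m nc a b" "nc > 0"
  shows "cos (\<theta> a - \<theta> b) > 0" "cos (\<theta> b - \<theta> a) > 0"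
proof -
  from assms(1,2) obtain k :: int where k: "\<bar>k\<bar> \<le> \<lceil>real nc / 4\<rceil> - 1"
    "cong_2pi (\<theta> a - \<theta> b) (2 * pi * of_int k / real nc)"
    unfolding cond_C1_def by blast
  show "cos (\<theta> a - \<theta> b) > 0"
    using cos_cong_2pi[OF k(2)] cos_label_angle_pos[OF assms(3) k(1)] by simp
  then show "cos (\<theta> b - \<theta> a) > 0" by (metis cos_minus minus_diff_eq)
qed

definition kuramoto_weights :: "nat \<Rightarrow> nat \<Rightarrow> real \<Rightarrow> (nat \<Rightarrow> real) \<Rightarrow> nat \<Rightarrow> nat \<Rightarrow> real" where
  "kuramoto_weights m nc c \<theta> i j = hc_adj m nc c (i + 1) (j + 1) * cos (\<theta> (j + 1) - \<theta> (i + 1))"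

lemma kuramoto_jac_eq_laplacian:
  "kuramoto_jac m nc c \<theta> = laplacian_mat (hc_n m nc) (kuramoto_weights m nc c \<theta>)"
  unfolding kuramoto_jac_def laplacian_mat_def kuramoto_weights_def
  by (intro cong_mat refl) (auto simp: sum.atLeast1_atMost_eq)

lemma kuramoto_weights_sym: "kuramoto_weights m nc c \<theta> i j = kuramoto_weights m nc c \<theta> j i"
proof -
  have "cos (\<theta> (j + 1) - \<theta> (i + 1)) = cos (\<theta> (i + 1) - \<theta> (j + 1))"
    by (metis cos_minus minus_diff_eq)
  then show ?thesis unfolding kuramoto_weights_def hc_adj_def by auto
qed

lemma kuramoto_weights_diag: "nc \<ge> 2 \<Longrightarrow> kuramoto_weights m nc c \<theta> i i = 0"
  unfolding kuramoto_weights_def hc_adj_def hc_edge_def by auto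

lemma kuramoto_weights_nonneg:
  assumes "cond_C1 m nc \<theta>" "nc > 0" "c > 0"
  shows "kuramoto_weights m nc c \<theta> i j \<ge> 0"
proof (cases "hc_edge m nc (i + 1) (j + 1) \<or> hc_edge m nc (j + 1) (i + 1)")
  case True
  then have "cos (\<theta> (j + 1) - \<theta> (i + 1)) > 0" using cond_C1_cos_pos[OF assms(1) _ assms(2)] by blast
  then show ?thesis unfolding kuramoto_weights_def hc_adj_def using True assms(3) by simp
qed (simp add: kuramoto_weights_def hc_adj_def)

lemma kuramoto_weights_path_pos:
  assumes "cond_C1 m nc \<theta>" "nc > 0" "c > 0" "Suc i < hc_n m nc"
  shows "kuramoto_weights m nc c \<theta> i (Suc i) > 0"
proof -
  have edge: "hc_edge m nc (i + 1) (Suc i + 1)" using assms(4) unfolding hc_edge_def hc_n_def by auto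
  then have "cos (\<theta> (Suc i + 1) - \<theta> (i + 1)) > 0" using cond_C1_cos_pos(2)[OF assms(1) edge assms(2)] by simp
  then show ?thesis unfolding kuramoto_weights_def hc_adj_def using edge assms(3) by simp
qed

lemma kuramoto_jac_spectrum:
  assumes nc: "nc \<ge> 5" and c: "c > 0" and C1: "cond_C1 m nc \<theta>"
  shows "kuramoto_jac m nc c \<theta> *\<^sub>v vec (hc_n m nc) (\<lambda>_. 1) = 0\<^sub>v (hc_n m nc)"
    and "order 0 (char_poly (map_mat complex_of_real (kuramoto_jac m nc c \<theta>))) = 1"
    and "eigenvalue (map_mat complex_of_real (kuramoto_jac m nc c \<theta>)) ev \<Longrightarrow> ev = 0 \<or> (Im ev = 0 \<and> Re ev < 0)"
proof -
  let ?W = "kuramoto_weights m nc c \<theta>" and ?n = "hc_n m nc"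
  have sym: "\<And>i j. ?W i j = ?W j i" by (rule kuramoto_weights_sym)
  have diag: "\<And>i. ?W i i = 0" using nc by (intro kuramoto_weights_diag) simp
  have nonneg: "\<And>i j. ?W i j \<ge> 0" using C1 nc c by (intro kuramoto_weights_nonneg) auto
  have path: "\<And>i. Suc i < ?n \<Longrightarrow> ?W i (Suc i) > 0" using C1 nc c by (intro kuramoto_weights_path_pos) auto
  have "?n > 0" by (simp add: hc_n_def)
  show "kuramoto_jac m nc c \<theta> *\<^sub>v vec ?n (\<lambda>_. 1) = 0\<^sub>v ?n"
    unfolding kuramoto_jac_eq_laplacian by (rule laplacian_mult_ones) (rule diag)
  show "order 0 (char_poly (map_mat complex_of_real (kuramoto_jac m nc c \<theta>))) = 1"
    unfolding kuramoto_jac_eq_laplacian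
    by (rule order_zero_char_poly_laplacian) (use sym diag nonneg path \<open>?n > 0\<close> in auto)
  show "eigenvalue (map_mat complex_of_real (kuramoto_jac m nc c \<theta>)) ev \<Longrightarrow> ev = 0 \<or> (Im ev = 0 \<and> Re ev < 0)"
    unfolding kuramoto_jac_eq_laplacian by (rule eigenvalue_laplacian_mat) (use sym diag nonneg in auto)
qed

theorem theorem3p1:
  fixes m nc :: nat and c :: real and \<omega> :: "nat \<Rightarrow> real"
  assumes "m \<ge> 1" and "nc \<ge> 5" and "c > 0"
    and "\<forall>i \<in> hc_V m nc. \<forall>j \<in> hc_V m nc. \<omega> i = \<omega> j"
  shows "int (card (hc_configs m nc // rot_rel m nc)) = (2 * \<lceil>real nc / 4\<rceil> - 1) ^ m
    \<and> (\<forall>\<theta> \<in> hc_configs m nc.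
         phase_locked m nc c \<omega> \<theta>
       \<and> kuramoto_jac m nc c \<theta> *\<^sub>v vec (hc_n m nc) (\<lambda>_. 1) = 0\<^sub>v (hc_n m nc)
       \<and> order 0 (char_poly (map_mat complex_of_real (kuramoto_jac m nc c \<theta>))) = 1
       \<and> (\<forall>ev. eigenvalue (map_mat complex_of_real (kuramoto_jac m nc c \<theta>)) ev \<longrightarrow>
              ev = 0 \<or> (Im ev = 0 \<and> Re ev < 0)))"
proof -
  have nc: "nc \<ge> 5" by fact
  have "int (card (hc_configs m nc // rot_rel m nc)) = (2 * \<lceil>real nc / 4\<rceil> - 1) ^ m"
    using card_hc_configs_quotient[OF nc] card_canon_labels[of nc m] nc by simp
  moreover have "phase_locked m nc c \<omega> \<theta>
       \<and> kuramoto_jac m nc c \<theta> *\<^sub>v vec (hc_n m nc) (\<lambda>_. 1) = 0\<^sub>v (hc_n m nc)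
       \<and> order 0 (char_poly (map_mat complex_of_real (kuramoto_jac m nc c \<theta>))) = 1
       \<and> (\<forall>ev. eigenvalue (map_mat complex_of_real (kuramoto_jac m nc c \<theta>)) ev \<longrightarrow>
              ev = 0 \<or> (Im ev = 0 \<and> Re ev < 0))"
    if \<theta>: "\<theta> \<in> hc_configs m nc" for \<theta>
  proof -
    have C1: "cond_C1 m nc \<theta>" using \<theta> unfolding hc_configs_def by simp
    show ?thesis
      using hc_configs_phase_locked[OF nc assms(4) \<theta>] kuramoto_jac_spectrum[OF nc assms(3) C1] by blast
  qed
  ultimately show ?thesis by blast
qed

end
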